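(* Let $0<q<1$. For complex numbers $\alpha,a,b,c$ with $\mathrm{Re}(c-a-b)>0$, and such that every $q^2$-gamma value occurring below is evaluated at a point that is not a non-positive integer, we have \[ \sum_{n=0}^{\infty}\frac{(\alpha|q^{2})_{a+n}\,(1-\alpha|q^{2})_{b+n}}{[n]_{q^{2}}!\,\Gamma_{q^{2}}(c+n+1)}\,q^{2(c-a-b)n} =\frac{(\alpha|q^{2})_{a}\,(1-\alpha|q^{2})_{b}\,\Gamma_{q^{2}}(c-a-b)}{(1-\alpha|q^{2})_{c-a}\,(\alpha|q^{2})_{c-b}}\;q^{-\alpha(\alpha-1)}\,\frac{\sin_{q}(\pi\alpha)}{\pi_{q}}. \]
   Context: Let $0<q<1$ and write $q^{x}=e^{x\log q}$ for complex $x$. Set $(z;q)_\infty=\prod_{k\ge0}(1-zq^k)$ and $(z_1,\dots,z_m;q)_\infty=\prod_j (z_j;q)_\infty$. The $q$-gamma function is $\Gamma_{q}(x)=\frac{(q;q)_\infty}{(q^{x};q)_\infty}(1-q)^{1-x}$; we use it with base $q^2$: $\Gamma_{q^2}(x)=\frac{(q^2;q^2)_\infty}{(q^{2x};q^2)_\infty}(1-q^2)^{1-x}$. For complex $x,\alpha$, the general $q$-shifted factorial is $(x|q^2)_\alpha=\Gamma_{q^2}(x+\alpha)/\Gamma_{q^2}(x)$. The $q$-integer is $[z]_{q^2}=\frac{1-q^{2z}}{1-q^2}$, and $[0]_{q^2}!=1$, $[n]_{q^2}!=\prod_{k=1}^n[k]_{q^2}$. Gosper's $q$-analogues: $\sin_q(\pi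 x)=q^{(x-1/2)^2}\frac{(q^{2-2x};q^2)_\infty(q^{2x};q^2)_\infty}{(q;q^2)_\infty^2}$ and $\pi_q=(1-q^2)q^{1/4}\frac{(q^2;q^2)_\infty^2}{(q;q^2)_\infty^2}$. *)

theory Defs
  imports "HOL-Analysis.Analysis"
begin

definition qpow :: "real \<Rightarrow> complex \<Rightarrow> complex" where
  "qpow p x = exp (x * complex_of_real (ln p))"

definition qpoch_inf :: "complex \<Rightarrow> real \<Rightarrow> complex" where
  "qpoch_inf z p = (\<Prod>k. 1 - z * complex_of_real (p ^ k))"

definition qgamma :: "real \<Rightarrow> complex \<Rightarrow> complex" where
  "qgamma p x = qpoch_inf (complex_of_real p) p / qpoch_inf (qpow p x) p * qpow (1 - p) (1 - x)"

definition qgamma_poles :: "real \<Rightarrow> complex set" where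
  "qgamma_poles p = {x. qpoch_inf (qpow p x) p = 0}"

definition qshift :: "real \<Rightarrow> complex \<Rightarrow> complex \<Rightarrow> complex" where
  "qshift p x a = qgamma p (x + a) / qgamma p x"

definition qint :: "real \<Rightarrow> nat \<Rightarrow> real" where
  "qint p n = (1 - p ^ n) / (1 - p)"

definition qfact :: "real \<Rightarrow> nat \<Rightarrow> real" where
  "qfact p n = (\<Prod>k = 1..n. qint p k)"

text \<open>Gosper's q-sine sin_q(\<pi> x) and q-pi.\<close>
definition qsin :: "real \<Rightarrow> complex \<Rightarrow> complex" where
  "qsin q x = qpow q ((x - 1/2)^2) * qpoch_inf (qpow q (2 - 2*x)) (q^2)
      * qpoch_inf (qpow q (2*x)) (q^2) / (qpoch_inf (complex_of_real q) (q^2))^2"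

definition qpi :: "real \<Rightarrow> complex" where
  "qpi q = complex_of_real (1 - q^2) * complex_of_real (q powr (1/4))
      * (qpoch_inf (complex_of_real (q^2)) (q^2))^2 / (qpoch_inf (complex_of_real q) (q^2))^2"

end

theory Submission
  imports Defs
begin

text \<open>
  After dividing by \<open>\<Gamma>\<^sub>q\<^sub>2(\<alpha>) \<Gamma>\<^sub>q\<^sub>2(1-\<alpha>)\<close>, which Gosper's reflection formula identifies with
  the factor \<open>q^(-\<alpha>(\<alpha>-1)) sin\<^sub>q(\<pi>\<alpha>)/\<pi>\<^sub>q\<close>, the identity is the q-Gauss summation
  \<open>\<Sum> (A;p)\<^sub>n (B;p)\<^sub>n/((p;p)\<^sub>n (C;p)\<^sub>n) (C/AB)^n = (C/A;p)\<^sub>\<infinity> (C/B;p)\<^sub>\<infinity>/((C;p)\<^sub>\<infinity> (C/AB;p)\<^sub>\<infinity>)\<close>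
  with \<open>p = q\<^sup>2\<close>, \<open>A = p^(\<alpha>+a)\<close>, \<open>B = p^(1-\<alpha>+b)\<close>, \<open>C = p^(c+1)\<close>, written in terms of q-gamma values.
  The q-Gauss sum \<open>S(C)\<close> satisfies the contiguous relation
  \<open>(1-C)(1-C/AB) S(C) = (1-C/A)(1-C/B) S(Cp)\<close>, obtained by telescoping; iterating it
  \<open>N\<close> times and letting \<open>N \<rightarrow> \<infinity>\<close> gives the product formula, because \<open>S(Cp\<^sup>N) \<rightarrow> 1\<close> by
  Tannery's theorem.
\<close>

section \<open>Finite q-Pochhammer symbols\<close>

definition qpoch :: "complex \<Rightarrow> real \<Rightarrow> nat \<Rightarrow> complex" where
  "qpoch X p n = (\<Prod>k<n. 1 - X * complex_of_real (p ^ k))"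

lemma qpoch_0 [simp]: "qpoch X p 0 = 1"
  by (simp add: qpoch_def)

lemma qpoch_Suc: "qpoch X p (Suc n) = qpoch X p n * (1 - X * complex_of_real (p ^ n))"
  by (simp add: qpoch_def)

lemma qpoch_Suc_shift: "qpoch X p (Suc n) = (1 - X) * qpoch (X * complex_of_real p) p n"
  unfolding qpoch_def by (subst prod.lessThan_Suc_shift) (simp add: mult_ac)

lemma convergent_prod_qpoch_factors:
  assumes "0 < p" "p < 1"
  shows "convergent_prod (\<lambda>k. 1 - X * complex_of_real (p ^ k))"
proof -
  have "summable (\<lambda>k. norm X * p ^ k)"
    using assms by (intro summable_mult summable_geometric) auto
  then have "summable (\<lambda>k. norm ((1 - X * complex_of_real (p ^ k)) - 1))"
    using assms by (simp add: norm_mult norm_power)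
  then show ?thesis
    by (intro abs_convergent_prod_imp_convergent_prod summable_imp_abs_convergent_prod)
qed

lemma qpoch_LIMSEQ:
  assumes "0 < p" "p < 1"
  shows "(\<lambda>n. qpoch X p n) \<longlonglongrightarrow> qpoch_inf X p"
proof -
  have "(\<lambda>n. \<Prod>k\<le>n. 1 - X * complex_of_real (p ^ k)) \<longlonglongrightarrow> qpoch_inf X p"
    unfolding qpoch_inf_def by (rule convergent_prod_LIMSEQ[OF convergent_prod_qpoch_factors[OF assms]])
  then have "(\<lambda>n. qpoch X p (Suc n)) \<longlonglongrightarrow> qpoch_inf X p"
    by (simp add: qpoch_def lessThan_Suc_atMost)
  then show ?thesis
    by (rule LIMSEQ_imp_Suc)
qed

lemma qpoch_inf_factor_nonzero:
  assumes "0 < p" "p < 1" "qpoch_inf X p \<noteq> 0"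
  shows "1 - X * complex_of_real (p ^ k) \<noteq> 0"
proof
  assume "1 - X * complex_of_real (p ^ k) = 0"
  moreover have "(\<lambda>k. 1 - X * complex_of_real (p ^ k)) has_prod qpoch_inf X p"
    unfolding qpoch_inf_def using convergent_prod_qpoch_factors[OF assms(1,2)] convergent_prod_has_prod
    by blast
  ultimately have "qpoch_inf X p = 0"
    using has_prod_eq_0_iff by (metis rangeI)
  with assms(3) show False
    by simp
qed

lemma qpoch_nonzero:
  assumes "0 < p" "p < 1" "qpoch_inf X p \<noteq> 0"
  shows "qpoch X p n \<noteq> 0"
  using qpoch_inf_factor_nonzero[OF assms] by (simp add: qpoch_def)

lemma qpoch_inf_split:
  assumes "0 < p" "p < 1" "qpoch_inf X p \<noteq> 0"
  shows "qpoch_inf X p = qpoch X p n * qpoch_inf (X * complex_of_real (p ^ n)) p"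
proof -
  have "qpoch_inf X p = (\<Prod>i. 1 - X * complex_of_real (p ^ (i + n))) * qpoch X p n"
    unfolding qpoch_inf_def qpoch_def
    by (rule prodinf_split_initial_segment[OF convergent_prod_qpoch_factors[OF assms(1,2)]])
       (use qpoch_inf_factor_nonzero[OF assms] in auto)
  also have "(\<Prod>i. 1 - X * complex_of_real (p ^ (i + n))) = qpoch_inf (X * complex_of_real (p ^ n)) p"
    unfolding qpoch_inf_def by (simp add: power_add mult_ac)
  finally show ?thesis
    by simp
qed

lemma qpoch_inf_of_real_nonzero:
  assumes "0 < p" "p < 1" "0 < x" "x < 1"
  shows "qpoch_inf (complex_of_real x) p \<noteq> 0"
  unfolding qpoch_inf_def
proof (rule prodinf_nonzero[OF convergent_prod_qpoch_factors[OF assms(1,2)]])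
  fix k
  have "x * p ^ k \<le> x"
    using assms mult_left_mono[of "p ^ k" 1 x] by (auto simp: power_le_one)
  then have "x * p ^ k < 1"
    using assms by linarith
  then show "1 - complex_of_real x * complex_of_real (p ^ k) \<noteq> 0"
    by (metis of_real_1 of_real_diff of_real_eq_0_iff of_real_mult right_minus_eq less_irrefl)
qed

lemma sum_geometric_le:
  fixes p :: real
  assumes "0 < p" "p < 1"
  shows "(\<Sum>k<n. p ^ k) \<le> 1 / (1 - p)"
proof -
  have "(\<Sum>k<n. p ^ k) = (1 - p ^ n) / (1 - p)"
    using sum_gp_strict[of p n] assms by simp
  also have "\<dots> \<le> 1 / (1 - p)"
    using assms by (intro divide_right_mono) auto
  finally show ?thesis .
qed

lemma norm_qpoch_le:
  assumes "0 < p" "p < 1"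
  shows "norm (qpoch X p n) \<le> exp (norm X / (1 - p))"
proof -
  have "norm (qpoch X p n) = (\<Prod>k<n. norm (1 - X * complex_of_real (p ^ k)))"
    by (simp add: qpoch_def prod_norm)
  also have "\<dots> \<le> (\<Prod>k<n. exp (norm X * p ^ k))"
  proof (rule prod_mono, safe)
    fix k
    have "norm (1 - X * complex_of_real (p ^ k)) \<le> 1 + norm X * p ^ k"
      using norm_triangle_ineq4[of 1 "X * complex_of_real (p ^ k)"] assms
      by (simp add: norm_mult norm_power)
    also have "\<dots> \<le> exp (norm X * p ^ k)"
      by (rule exp_ge_add_one_self)
    finally show "norm (1 - X * complex_of_real (p ^ k)) \<le> exp (norm X * p ^ k)" .
  qed simp
  also have "\<dots> = exp (norm X * (\<Sum>k<n. p ^ k))"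
    by (simp add: exp_sum sum_distrib_left)
  also have "\<dots> \<le> exp (norm X / (1 - p))"
    using mult_left_mono[OF sum_geometric_le[OF assms, of n] norm_ge_zero[of X]] by simp
  finally show ?thesis .
qed

lemma exp_minus_two_mult_le_one_minus:
  fixes x :: real
  assumes "0 \<le> x" "x \<le> 1/2"
  shows "exp (-2 * x) \<le> 1 - x"
proof -
  have "1 + 2 * x \<le> exp (2 * x)"
    by (rule exp_ge_add_one_self)
  then have "exp (-2 * x) \<le> 1 / (1 + 2 * x)"
    using assms by (simp add: exp_minus field_simps)
  also have "\<dots> \<le> 1 - x"
    using assms mult_left_mono[of "x * 2" 1 x] by (simp add: field_simps)
  finally show ?thesis .
qed

lemma norm_qpoch_ge:
  assumes "0 < p" "p < 1" "norm W \<le> 1/2"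
  shows "exp (-1 / (1 - p)) \<le> norm (qpoch W p n)"
proof -
  have "2 * norm W * (\<Sum>k<n. p ^ k) \<le> 1 * (1 / (1 - p))"
    using sum_geometric_le[OF assms(1,2), of n] assms by (intro mult_mono) (auto intro!: sum_nonneg)
  then have "exp (-1 / (1 - p)) \<le> exp (-2 * norm W * (\<Sum>k<n. p ^ k))"
    by simp
  also have "\<dots> = (\<Prod>k<n. exp (-2 * (norm W * p ^ k)))"
    by (simp add: exp_sum[symmetric] sum_distrib_left mult_ac sum_negf)
  also have "\<dots> \<le> (\<Prod>k<n. norm (1 - W * complex_of_real (p ^ k)))"
  proof (rule prod_mono, safe)
    fix k
    have pk: "0 \<le> p ^ k" "p ^ k \<le> 1"
      using assms by (auto simp: power_le_one)
    then have "norm W * p ^ k \<le> 1/2"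
      using mult_mono[OF assms(3) pk(2)] by simp
    then have "exp (-2 * (norm W * p ^ k)) \<le> 1 - norm W * p ^ k"
      using pk by (intro exp_minus_two_mult_le_one_minus) auto
    also have "\<dots> \<le> norm (1 - W * complex_of_real (p ^ k))"
      using norm_triangle_ineq2[of 1 "W * complex_of_real (p ^ k)"] pk assms(1)
      by (simp add: norm_mult norm_power abs_of_nonneg)
    finally show "exp (-2 * (norm W * p ^ k)) \<le> norm (1 - W * complex_of_real (p ^ k))" .
  qed simp
  also have "\<dots> = norm (qpoch W p n)"
    by (simp add: qpoch_def prod_norm)
  finally show ?thesis .
qed

lemma norm_qpoch_inf_le_norm_qpoch:
  assumes p: "0 < p" "p < 1" and x: "0 \<le> x" "x \<le> 1"
  shows "norm (qpoch_inf (complex_of_real x) p) \<le> norm (qpoch (complex_of_real x) p n)"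
proof -
  have "decseq (\<lambda>m. norm (qpoch (complex_of_real x) p m))"
  proof (rule decseq_SucI)
    fix m
    have "0 \<le> x * p ^ m" "x * p ^ m \<le> 1"
      using p x by (auto intro: mult_le_one simp: power_le_one)
    moreover have "1 - complex_of_real x * complex_of_real (p ^ m) = complex_of_real (1 - x * p ^ m)"
      by simp
    ultimately have "norm (1 - complex_of_real x * complex_of_real (p ^ m)) \<le> 1"
      by (simp only: norm_of_real)
    then show "norm (qpoch (complex_of_real x) p (Suc m)) \<le> norm (qpoch (complex_of_real x) p m)"
      unfolding qpoch_Suc norm_mult by (intro mult_left_le) auto
  qed
  then show ?thesis
    by (intro LIMSEQ_le_const2[OF tendsto_norm[OF qpoch_LIMSEQ[OF p]]]) (auto dest: decseqD)
qed

section \<open>The q-Gauss summation\<close>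

definition qgauss_term :: "complex \<Rightarrow> complex \<Rightarrow> complex \<Rightarrow> real \<Rightarrow> nat \<Rightarrow> complex" where
  "qgauss_term A B C p n =
     qpoch A p n * qpoch B p n / (qpoch (complex_of_real p) p n * qpoch C p n) * (C / (A * B)) ^ n"

lemma qgauss_term_0 [simp]: "qgauss_term A B C p 0 = 1"
  by (simp add: qgauss_term_def)

lemma qgauss_term_Suc:
  "qgauss_term A B C p (Suc n) = qgauss_term A B C p n *
     ((1 - A * complex_of_real p ^ n) * (1 - B * complex_of_real p ^ n) /
      ((1 - complex_of_real p ^ Suc n) * (1 - C * complex_of_real p ^ n)) * (C / (A * B)))"
  by (simp add: qgauss_term_def qpoch_Suc divide_inverse inverse_mult_distrib mult_ac)

lemma qgauss_term_mult_C:
  assumes "\<And>k. 1 - C * complex_of_real p ^ k \<noteq> 0"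
  shows "qgauss_term A B (C * complex_of_real p) p n =
     qgauss_term A B C p n * (complex_of_real p ^ n * (1 - C) / (1 - C * complex_of_real p ^ n))"
proof -
  have "qpoch (C * complex_of_real p) p n = qpoch C p n * (1 - C * complex_of_real p ^ n) / (1 - C)"
    using qpoch_Suc[of C p n] qpoch_Suc_shift[of C p n] assms[of 0] by (simp add: field_simps)
  then show ?thesis
    unfolding qgauss_term_def using assms[of 0] assms[of n]
    by (simp add: divide_inverse inverse_mult_distrib power_mult_distrib mult_ac)
qed

lemma summable_qgauss_term:
  assumes p: "0 < p" "p < 1" and z: "norm (C / (A * B)) < 1"
  shows "summable (qgauss_term A B C p)"
proof -
  define r where "r = (\<lambda>u. (1 - A * u) * (1 - B * u) /
      ((1 - complex_of_real p * u) * (1 - C * u)) * (C / (A * B)))"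
  define c where "c = (1 + norm (C / (A * B))) / 2"
  have c: "c < 1" "norm (C / (A * B)) < c"
    using z by (auto simp: c_def)
  have "(\<lambda>n. complex_of_real p ^ n) \<longlonglongrightarrow> 0"
    using p by (intro LIMSEQ_power_zero) auto
  then have "(\<lambda>n. r (complex_of_real p ^ n)) \<longlonglongrightarrow> r 0"
    unfolding r_def using p by (intro tendsto_intros) auto
  then have "(\<lambda>n. norm (r (complex_of_real p ^ n))) \<longlonglongrightarrow> norm (C / (A * B))"
    by (intro tendsto_eq_intros) (auto simp: r_def)
  then have "eventually (\<lambda>n. norm (r (complex_of_real p ^ n)) < c) sequentially"
    using c(2) by (rule order_tendstoD)
  then obtain N where N: "\<And>n. n \<ge> N \<Longrightarrow> norm (r (complex_of_real p ^ n)) < c"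
    by (auto simp: eventually_sequentially)
  show ?thesis
  proof (rule summable_ratio_test[OF c(1)])
    fix n
    assume "n \<ge> N"
    have "norm (qgauss_term A B C p (Suc n)) = norm (qgauss_term A B C p n) * norm (r (complex_of_real p ^ n))"
      by (simp only: qgauss_term_Suc r_def norm_mult power_Suc)
    also have "\<dots> \<le> norm (qgauss_term A B C p n) * c"
      using N[OF \<open>n \<ge> N\<close>] by (intro mult_left_mono) auto
    finally show "norm (qgauss_term A B C p (Suc n)) \<le> c * norm (qgauss_term A B C p n)"
      by (simp add: mult_ac)
  qed
qed

lemma qgauss_contiguous_identity:
  fixes A B C T u v :: complex
  assumes "A \<noteq> 0" "B \<noteq> 0" "1 - v * u \<noteq> 0" "1 - C * u \<noteq> 0"
  shows "(1 - C) * (1 - C / (A * B)) * T - (1 - C / A) * (1 - C / B) * (T * (u * (1 - C) / (1 - C * u)))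
       = (1 - C) * (1 - u) * T - (1 - C) * (1 - v * u) *
         (T * ((1 - A * u) * (1 - B * u) / ((1 - v * u) * (1 - C * u)) * (C / (A * B))))"
proof -
  have cancel: "(1 - v * u) * (T * ((1 - A * u) * (1 - B * u) / ((1 - v * u) * (1 - C * u)) * (C / (A * B))))
      = T * (1 - A * u) * (1 - B * u) * C / ((1 - C * u) * (A * B))"
    using assms(3) by (simp add: divide_simps)
  show ?thesis
    unfolding mult.assoc[of "1 - C" "1 - v * u"] cancel using assms(1,2,4) by (simp add: field_simps)
qed

lemma qgauss_contiguous:
  assumes p: "0 < p" "p < 1" and AB: "A \<noteq> 0" "B \<noteq> 0"
    and z: "norm (C / (A * B)) < 1"
    and C: "\<And>k. 1 - C * complex_of_real p ^ k \<noteq> 0"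
  shows "(1 - C) * (1 - C / (A * B)) * suminf (qgauss_term A B C p) =
         (1 - C / A) * (1 - C / B) * suminf (qgauss_term A B (C * complex_of_real p) p)"
proof -
  \<comment> \<open>Termwise, the difference of the two sides is \<open>g n - g (Suc n)\<close>.\<close>
  define g where "g = (\<lambda>n. (1 - C) * (1 - complex_of_real p ^ n) * qgauss_term A B C p n)"
  have s1: "summable (qgauss_term A B C p)"
    by (rule summable_qgauss_term[OF p z])
  have "norm (C * complex_of_real p / (A * B)) = norm (C / (A * B)) * p"
    using p by (simp add: norm_mult norm_divide)
  also have "\<dots> < 1"
    using z p mult_strict_mono[of "norm (C / (A * B))" 1 p 1] by simp
  finally have s2: "summable (qgauss_term A B (C * complex_of_real p) p)"
    by (rule summable_qgauss_term[OF p])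
  have "g \<longlonglongrightarrow> (1 - C) * (1 - 0) * 0"
    unfolding g_def using p summable_LIMSEQ_zero[OF s1] by (intro tendsto_intros) auto
  then have "(\<lambda>n. g n - g (Suc n)) sums (g 0 - 0)"
    by (intro telescope_sums') simp
  moreover have "g n - g (Suc n) = (1 - C) * (1 - C / (A * B)) * qgauss_term A B C p n -
      (1 - C / A) * (1 - C / B) * qgauss_term A B (C * complex_of_real p) p n" for n
  proof -
    have "norm (complex_of_real p ^ Suc n) < 1"
      using p power_Suc_less_one[of p n] by (simp add: norm_power del: power_Suc)
    then have "1 - complex_of_real p * complex_of_real p ^ n \<noteq> 0"
      by (metis norm_one right_minus_eq less_irrefl power_Suc)
    then show ?thesis
      unfolding g_def qgauss_term_Suc qgauss_term_mult_C[OF C] power_Suc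
      by (rule qgauss_contiguous_identity[OF AB _ C, symmetric])
  qed
  ultimately have "(\<lambda>n. (1 - C) * (1 - C / (A * B)) * qgauss_term A B C p n -
      (1 - C / A) * (1 - C / B) * qgauss_term A B (C * complex_of_real p) p n) sums 0"
    by (simp add: g_def)
  moreover have "(\<lambda>n. (1 - C) * (1 - C / (A * B)) * qgauss_term A B C p n -
      (1 - C / A) * (1 - C / B) * qgauss_term A B (C * complex_of_real p) p n) sums
      ((1 - C) * (1 - C / (A * B)) * suminf (qgauss_term A B C p) -
       (1 - C / A) * (1 - C / B) * suminf (qgauss_term A B (C * complex_of_real p) p))"
    by (intro sums_diff sums_mult summable_sums s1 s2)
  ultimately show ?thesis
    using sums_unique2 by fastforce
qed

lemma qgauss_contiguous_iterate:
  assumes p: "0 < p" "p < 1" and AB: "A \<noteq> 0" "B \<noteq> 0"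
    and z: "norm (C / (A * B)) < 1"
    and C: "\<And>k. 1 - C * complex_of_real p ^ k \<noteq> 0"
  shows "qpoch C p N * qpoch (C / (A * B)) p N * suminf (qgauss_term A B C p) =
         qpoch (C / A) p N * qpoch (C / B) p N * suminf (qgauss_term A B (C * complex_of_real p ^ N) p)"
proof (induction N)
  case 0
  then show ?case
    by simp
next
  case (Suc N)
  define C' where "C' = C * complex_of_real p ^ N"
  have "norm (C' / (A * B)) = norm (C / (A * B)) * p ^ N"
    using p by (simp add: C'_def norm_mult norm_divide norm_power)
  also have "\<dots> \<le> norm (C / (A * B))"
    using p mult_left_mono[of "p ^ N" 1 "norm (C / (A * B))"] by (simp add: power_le_one)
  finally have z': "norm (C' / (A * B)) < 1"
    using z by simp
  have C': "1 - C' * complex_of_real p ^ k \<noteq> 0" for k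
    using C[of "N + k"] by (simp add: C'_def power_add mult_ac)
  have C'_p: "C' * complex_of_real p = C * complex_of_real p ^ Suc N"
    by (simp add: C'_def mult_ac)
  have "qpoch C p (Suc N) * qpoch (C / (A * B)) p (Suc N) * suminf (qgauss_term A B C p) =
        (qpoch C p N * qpoch (C / (A * B)) p N * suminf (qgauss_term A B C p)) *
        ((1 - C') * (1 - C' / (A * B)))"
    by (simp add: qpoch_Suc C'_def mult_ac)
  also have "\<dots> = qpoch (C / A) p N * qpoch (C / B) p N *
      ((1 - C') * (1 - C' / (A * B)) * suminf (qgauss_term A B C' p))"
    by (simp only: Suc.IH) (simp add: C'_def mult_ac)
  also have "\<dots> = qpoch (C / A) p N * qpoch (C / B) p N * ((1 - C' / A) * (1 - C' / B)) *
      suminf (qgauss_term A B (C * complex_of_real p ^ Suc N) p)"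
    using qgauss_contiguous[OF p AB z' C'] unfolding C'_p by (simp only: mult.assoc)
  also have "\<dots> = qpoch (C / A) p (Suc N) * qpoch (C / B) p (Suc N) *
      suminf (qgauss_term A B (C * complex_of_real p ^ Suc N) p)"
    by (simp add: qpoch_Suc C'_def mult_ac)
  finally show ?case .
qed

lemma norm_qgauss_term_le:
  assumes p: "0 < p" "p < 1" and W: "norm W \<le> 1/2"
  shows "norm (qgauss_term A B W p n) \<le>
    exp (norm A / (1 - p)) * exp (norm B / (1 - p)) /
      (norm (qpoch_inf (complex_of_real p) p) * exp (-1 / (1 - p))) * norm (W / (A * B)) ^ n"
proof -
  have "norm (qgauss_term A B W p n) =
      norm (qpoch A p n) * norm (qpoch B p n) /
        (norm (qpoch (complex_of_real p) p n) * norm (qpoch W p n)) * norm (W / (A * B)) ^ n"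
    by (simp add: qgauss_term_def norm_mult norm_divide norm_power)
  also have "\<dots> \<le> exp (norm A / (1 - p)) * exp (norm B / (1 - p)) /
      (norm (qpoch_inf (complex_of_real p) p) * exp (-1 / (1 - p))) * norm (W / (A * B)) ^ n"
    using p qpoch_inf_of_real_nonzero[OF p p]
    by (intro mult_right_mono frac_le mult_mono mult_nonneg_nonneg
        norm_qpoch_le norm_qpoch_ge[OF p W] norm_qpoch_inf_le_norm_qpoch) auto
  finally show ?thesis .
qed

lemma norm_qgauss_term_mult_C_power_le:
  fixes A B C :: complex
  assumes p: "0 < p" "p < 1"
  obtains K N0 where "0 \<le> K" and "\<And>N n. N \<ge> N0 \<Longrightarrow>
    norm (qgauss_term A B (C * complex_of_real p ^ N) p n) \<le> K * norm (C / (A * B)) ^ n * (p ^ n) ^ N"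
proof -
  define K where "K = exp (norm A / (1 - p)) * exp (norm B / (1 - p)) /
      (norm (qpoch_inf (complex_of_real p) p) * exp (-1 / (1 - p)))"
  have "(\<lambda>N. norm C * p ^ N) \<longlonglongrightarrow> norm C * 0"
    using p by (intro tendsto_intros LIMSEQ_power_zero) auto
  then have "eventually (\<lambda>N. norm C * p ^ N < 1/2) sequentially"
    by (intro order_tendstoD) auto
  then obtain N0 where "\<And>N. N \<ge> N0 \<Longrightarrow> norm C * p ^ N < 1/2"
    by (auto simp: eventually_sequentially)
  then have N0: "norm (C * complex_of_real p ^ N) \<le> 1/2" if "N \<ge> N0" for N
    using p that by (simp add: norm_mult norm_power) (meson less_imp_le that)
  have bound: "norm (qgauss_term A B (C * complex_of_real p ^ N) p n) \<le> K * norm (C / (A * B)) ^ n * (p ^ n) ^ N"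
    if "N \<ge> N0" for N n
  proof -
    have "norm (C * complex_of_real p ^ N / (A * B)) ^ n = (norm (C / (A * B)) * p ^ N) ^ n"
      using p by (simp add: norm_mult norm_divide norm_power)
    also have "\<dots> = norm (C / (A * B)) ^ n * (p ^ n) ^ N"
      by (metis power_mult_distrib power_mult mult.commute)
    finally show ?thesis
      using norm_qgauss_term_le[OF p N0[OF that], of A B n] by (simp add: K_def mult.assoc)
  qed
  have "0 \<le> K"
    by (simp add: K_def)
  then show ?thesis
    using bound by (rule that)
qed

lemma qgauss_sum_mult_C_power_LIMSEQ:
  assumes p: "0 < p" "p < 1" and z: "norm (C / (A * B)) < 1"
  shows "(\<lambda>N. suminf (qgauss_term A B (C * complex_of_real p ^ N) p)) \<longlonglongrightarrow> 1"
proof -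
  define z where "z = norm (C / (A * B))"
  obtain K N0 where K: "0 \<le> K" and bound: "\<And>N n. N \<ge> N0 \<Longrightarrow>
      norm (qgauss_term A B (C * complex_of_real p ^ N) p n) \<le> K * z ^ n * (p ^ n) ^ N"
    using norm_qgauss_term_mult_C_power_le[OF p, of A B C] unfolding z_def by blast
  define b :: "nat \<Rightarrow> complex" where "b n = (if n = 0 then 1 else 0)" for n
  have "(\<lambda>N. suminf (qgauss_term A B (C * complex_of_real p ^ N) p)) \<longlonglongrightarrow> suminf b"
  proof (rule tannerys_theorem[of _ b _ "\<lambda>n. K * z ^ n", THEN conjunct2, THEN conjunct2])
    fix n
    show "(\<lambda>N. qgauss_term A B (C * complex_of_real p ^ N) p n) \<longlonglongrightarrow> b n"
    proof (cases "n = 0")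
      case False
      then have "p ^ n < 1"
        using p power_less_one_iff[of p n] by auto
      then have "(\<lambda>N. K * z ^ n * (p ^ n) ^ N) \<longlonglongrightarrow> 0"
        using p tendsto_mult_left[OF LIMSEQ_power_zero[of "p ^ n"], of "K * z ^ n"] by simp
      then have "(\<lambda>N. qgauss_term A B (C * complex_of_real p ^ N) p n) \<longlonglongrightarrow> 0"
        by (rule Lim_null_comparison[rotated]) (use bound in \<open>auto simp: eventually_sequentially\<close>)
      then show ?thesis
        using False by (simp add: b_def)
    qed (simp add: b_def)
  next
    have "norm (qgauss_term A B (C * complex_of_real p ^ N) p n) \<le> K * z ^ n" if "N \<ge> N0" for N n
      using bound[OF that, of n] mult_left_mono[of "(p ^ n) ^ N" 1 "K * z ^ n"] p K
      by (simp add: z_def power_le_one)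
    then show "eventually (\<lambda>(n, N). norm (qgauss_term A B (C * complex_of_real p ^ N) p n) \<le> K * z ^ n)
        (at_top \<times>\<^sub>F sequentially)"
      unfolding eventually_prod_filter
      by (intro exI[of _ "\<lambda>_. True"] exI[of _ "\<lambda>N. N \<ge> N0"]) (auto simp: eventually_ge_at_top)
  next
    show "summable (\<lambda>n. K * z ^ n)"
      using z by (intro summable_mult summable_geometric) (auto simp: z_def)
  qed simp
  moreover have "b sums 1"
    unfolding b_def using sums_single[of 0 "\<lambda>_. 1 :: complex"] by simp
  ultimately show ?thesis
    by (simp add: sums_iff)
qed

theorem q_gauss_sum:
  assumes p: "0 < p" "p < 1" and AB: "A \<noteq> 0" "B \<noteq> 0"
    and z: "norm (C / (A * B)) < 1"
    and C: "qpoch_inf C p \<noteq> 0" and CAB: "qpoch_inf (C / (A * B)) p \<noteq> 0"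
  shows "qgauss_term A B C p sums
    (qpoch_inf (C / A) p * qpoch_inf (C / B) p / (qpoch_inf C p * qpoch_inf (C / (A * B)) p))"
proof -
  have "1 - C * complex_of_real p ^ k \<noteq> 0" for k
    using qpoch_inf_factor_nonzero[OF p C, of k] by simp
  note iterate = qgauss_contiguous_iterate[OF p AB z this]
  have "(\<lambda>N. qpoch C p N * qpoch (C / (A * B)) p N * suminf (qgauss_term A B C p)) \<longlonglongrightarrow>
      qpoch_inf C p * qpoch_inf (C / (A * B)) p * suminf (qgauss_term A B C p)"
    by (intro tendsto_intros qpoch_LIMSEQ[OF p])
  moreover have "(\<lambda>N. qpoch C p N * qpoch (C / (A * B)) p N * suminf (qgauss_term A B C p)) \<longlonglongrightarrow>
      qpoch_inf (C / A) p * qpoch_inf (C / B) p * 1"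
    unfolding iterate by (intro tendsto_intros qpoch_LIMSEQ[OF p] qgauss_sum_mult_C_power_LIMSEQ[OF p z])
  ultimately have "qpoch_inf C p * qpoch_inf (C / (A * B)) p * suminf (qgauss_term A B C p) =
      qpoch_inf (C / A) p * qpoch_inf (C / B) p"
    using LIMSEQ_unique by fastforce
  then have "suminf (qgauss_term A B C p) =
      qpoch_inf (C / A) p * qpoch_inf (C / B) p / (qpoch_inf C p * qpoch_inf (C / (A * B)) p)"
    using C CAB by (simp add: field_simps)
  then show ?thesis
    using summable_sums[OF summable_qgauss_term[OF p z]] by simp
qed

section \<open>Complex powers and the q-gamma function\<close>

lemma qpow_add: "qpow b (x + y) = qpow b x * qpow b y"
  by (simp add: qpow_def distrib_right exp_add)

lemma qpow_diff: "qpow b (x - y) = qpow b x / qpow b y"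
  by (simp add: qpow_def left_diff_distrib exp_diff)

lemma qpow_nonzero [simp]: "qpow b x \<noteq> 0"
  by (simp add: qpow_def)

lemma qpow_mult_of_nat: "qpow b (x * of_nat n) = qpow b x ^ n"
  unfolding qpow_def by (subst exp_of_nat_mult[symmetric]) (simp add: mult_ac)

lemma qpow_of_nat: "0 < b \<Longrightarrow> qpow b (of_nat n) = complex_of_real b ^ n"
  using qpow_mult_of_nat[of b 1 n] by (simp add: qpow_def exp_of_real)

lemma qpow_1: "0 < b \<Longrightarrow> qpow b 1 = complex_of_real b"
  by (simp add: qpow_def exp_of_real)

lemma qpow_power2: "0 < q \<Longrightarrow> qpow (q\<^sup>2) x = qpow q (2 * x)"
  by (simp add: qpow_def ln_realpow mult_ac)

lemma qpow_of_real: "0 < q \<Longrightarrow> qpow q (complex_of_real r) = complex_of_real (q powr r)"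
  by (simp add: qpow_def powr_def exp_of_real[symmetric] mult_ac)

lemma norm_qpow_less_1:
  assumes "0 < p" "p < 1" "Re x > 0"
  shows "norm (qpow p x) < 1"
proof -
  have "Re x * ln p < 0"
    using assms by (simp add: mult_pos_neg)
  then show ?thesis
    by (simp add: qpow_def)
qed

lemma qgamma_nonzero:
  assumes "0 < p" "p < 1" "x \<notin> qgamma_poles p"
  shows "qgamma p x \<noteq> 0"
  using assms qpoch_inf_of_real_nonzero[OF assms(1,2) assms(1,2)]
  by (simp add: qgamma_def qgamma_poles_def)

lemma qgamma_mult_qpoch_inf:
  assumes "x \<notin> qgamma_poles p"
  shows "qgamma p x * qpoch_inf (qpow p x) p = qpoch_inf (complex_of_real p) p * qpow (1 - p) (1 - x)"
  using assms by (simp add: qgamma_def qgamma_poles_def)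

lemma qgamma_qpoch_inf_balance:
  assumes "u \<notin> qgamma_poles p" "v \<notin> qgamma_poles p" "s \<notin> qgamma_poles p" "t \<notin> qgamma_poles p"
    and "u + v = s + t"
  shows "qgamma p u * qgamma p v * qpoch_inf (qpow p u) p * qpoch_inf (qpow p v) p =
         qgamma p s * qgamma p t * qpoch_inf (qpow p s) p * qpoch_inf (qpow p t) p"
proof -
  have product: "qgamma p x * qgamma p y * qpoch_inf (qpow p x) p * qpoch_inf (qpow p y) p =
      qpoch_inf (complex_of_real p) p ^ 2 * qpow (1 - p) (2 - (x + y))"
    if "x \<notin> qgamma_poles p" "y \<notin> qgamma_poles p" for x y
  proof -
    have "qgamma p x * qgamma p y * qpoch_inf (qpow p x) p * qpoch_inf (qpow p y) p =
        (qgamma p x * qpoch_inf (qpow p x) p) * (qgamma p y * qpoch_inf (qpow p y) p)"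
      by (simp only: mult_ac)
    also have "\<dots> = qpoch_inf (complex_of_real p) p ^ 2 * (qpow (1 - p) (1 - x) * qpow (1 - p) (1 - y))"
      by (simp only: qgamma_mult_qpoch_inf[OF that(1)] qgamma_mult_qpoch_inf[OF that(2)] power2_eq_square mult_ac)
    also have "(1 - x) + (1 - y) = 2 - (x + y)"
      by simp
    then have "qpow (1 - p) (1 - x) * qpow (1 - p) (1 - y) = qpow (1 - p) (2 - (x + y))"
      by (metis qpow_add)
    finally show ?thesis .
  qed
  show ?thesis
    using product[OF assms(1,2)] product[OF assms(3,4)] assms(5) by simp
qed

lemma qgamma_add_of_nat:
  assumes p: "0 < p" "p < 1" and x: "x \<notin> qgamma_poles p"
  shows "qgamma p (x + of_nat n) = qgamma p x * qpoch (qpow p x) p n / complex_of_real (1 - p) ^ n"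
proof -
  have P: "qpoch_inf (qpow p x) p \<noteq> 0"
    using x by (simp add: qgamma_poles_def)
  have split: "qpoch_inf (qpow p x) p = qpoch (qpow p x) p n * qpoch_inf (qpow p (x + of_nat n)) p"
    using qpoch_inf_split[OF p P, of n] p by (simp add: qpow_add qpow_of_nat)
  have "qpow (1 - p) (1 - (x + of_nat n)) = qpow (1 - p) ((1 - x) - of_nat n)"
    by (simp add: algebra_simps)
  then have "qpow (1 - p) (1 - (x + of_nat n)) = qpow (1 - p) (1 - x) / complex_of_real (1 - p) ^ n"
    using p by (simp add: qpow_diff qpow_of_nat)
  moreover have "qpoch (qpow p x) p n \<noteq> 0" "complex_of_real (1 - p) \<noteq> 0"
    using qpoch_nonzero[OF p P] p by auto
  ultimately show ?thesis
    unfolding qgamma_def using split P by (simp add: field_simps)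
qed

lemma of_real_qfact:
  assumes "0 < p" "p < 1"
  shows "complex_of_real (qfact p n) = qpoch (complex_of_real p) p n / complex_of_real (1 - p) ^ n"
proof (induction n)
  case 0
  then show ?case
    by (simp add: qfact_def)
next
  case (Suc n)
  have "qfact p (Suc n) = qfact p n * ((1 - p ^ Suc n) / (1 - p))"
    by (simp add: qfact_def qint_def prod.cl_ivl_Suc)
  then have "complex_of_real (qfact p (Suc n)) =
      complex_of_real (qfact p n) * ((1 - complex_of_real p ^ Suc n) / complex_of_real (1 - p))"
    by simp
  then show ?case
    unfolding Suc.IH qpoch_Suc using assms by (simp add: field_simps)
qed

lemma qgamma_reflection:
  assumes q: "0 < q" "q < 1"
    and \<alpha>: "\<alpha> \<notin> qgamma_poles (q\<^sup>2)" "1 - \<alpha> \<notin> qgamma_poles (q\<^sup>2)"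
  shows "qpow q (- \<alpha> * (\<alpha> - 1)) * qsin q \<alpha> / qpi q = 1 / (qgamma (q\<^sup>2) \<alpha> * qgamma (q\<^sup>2) (1 - \<alpha>))"
proof -
  define p where "p = q\<^sup>2"
  have p: "0 < p" "p < 1"
    using q by (auto simp: p_def power_less_one_iff)
  have nonzero: "qpoch_inf (complex_of_real q) p \<noteq> 0" "qpoch_inf (complex_of_real p) p \<noteq> 0"
    "complex_of_real (1 - p) \<noteq> 0" "q powr (1/4) \<noteq> 0"
    using qpoch_inf_of_real_nonzero[OF p q] qpoch_inf_of_real_nonzero[OF p p] p q by auto
  have "qpow q (- \<alpha> * (\<alpha> - 1)) * qpow q ((\<alpha> - 1/2)\<^sup>2) = qpow q (complex_of_real (1/4))"
    by (subst qpow_add[symmetric]) (simp add: power2_eq_square algebra_simps)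
  then have quarter: "qpow q (- \<alpha> * (\<alpha> - 1)) * qpow q ((\<alpha> - 1/2)\<^sup>2) = complex_of_real (q powr (1/4))"
    using q qpow_of_real[of q "1/4"] by simp
  have "qpow q (2 - 2 * \<alpha>) = qpow p (1 - \<alpha>)" "qpow q (2 * \<alpha>) = qpow p \<alpha>"
    using q by (simp_all add: p_def qpow_power2 algebra_simps)
  then have "qpow q (- \<alpha> * (\<alpha> - 1)) * qsin q \<alpha> / qpi q =
      (qpow q (- \<alpha> * (\<alpha> - 1)) * qpow q ((\<alpha> - 1/2)\<^sup>2)) * qpoch_inf (qpow p (1 - \<alpha>)) p *
        qpoch_inf (qpow p \<alpha>) p / qpoch_inf (complex_of_real q) p ^ 2 /
      (complex_of_real (1 - p) * complex_of_real (q powr (1/4)) *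
        qpoch_inf (complex_of_real p) p ^ 2 / qpoch_inf (complex_of_real q) p ^ 2)"
    unfolding qsin_def qpi_def p_def by (simp add: mult_ac)
  also have "\<dots> = qpoch_inf (qpow p (1 - \<alpha>)) p * qpoch_inf (qpow p \<alpha>) p /
      (complex_of_real (1 - p) * qpoch_inf (complex_of_real p) p ^ 2)"
    unfolding quarter using nonzero by (simp add: field_simps)
  also have "\<dots> = 1 / (qgamma p \<alpha> * qgamma p (1 - \<alpha>))"
  proof -
    have P: "qpoch_inf (qpow p \<alpha>) p \<noteq> 0" "qpoch_inf (qpow p (1 - \<alpha>)) p \<noteq> 0"
      using \<alpha> by (simp_all add: qgamma_poles_def p_def)
    have "qgamma p \<alpha> * qgamma p (1 - \<alpha>) * (qpoch_inf (qpow p \<alpha>) p * qpoch_inf (qpow p (1 - \<alpha>)) p)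
        = qpoch_inf (complex_of_real p) p ^ 2 * (qpow (1 - p) (1 - \<alpha>) * qpow (1 - p) (1 - (1 - \<alpha>)))"
      using \<alpha> by (simp add: qgamma_mult_qpoch_inf p_def power2_eq_square mult_ac)
    also have "\<dots> = complex_of_real (1 - p) * qpoch_inf (complex_of_real p) p ^ 2"
      using p by (simp add: qpow_1 mult.commute flip: qpow_add)
    finally have "qgamma p \<alpha> * qgamma p (1 - \<alpha>) =
        complex_of_real (1 - p) * qpoch_inf (complex_of_real p) p ^ 2 /
          (qpoch_inf (qpow p \<alpha>) p * qpoch_inf (qpow p (1 - \<alpha>)) p)"
      using P by (simp add: eq_divide_eq)
    then show ?thesis
      by (simp add: mult.commute)
  qed
  finally show ?thesis
    by (simp add: p_def)
qed

theorem q_gauss_sum_qgamma: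
  assumes p: "0 < p" "p < 1" and re: "Re (w - x - y) > 0"
    and poles: "x \<notin> qgamma_poles p" "y \<notin> qgamma_poles p" "w \<notin> qgamma_poles p"
      "w - x - y \<notin> qgamma_poles p" "w - x \<notin> qgamma_poles p" "w - y \<notin> qgamma_poles p"
  shows "(\<lambda>n. qgamma p (x + of_nat n) * qgamma p (y + of_nat n)
              / (complex_of_real (qfact p n) * qgamma p (w + of_nat n)) * qpow p ((w - x - y) * of_nat n))
         sums (qgamma p x * qgamma p y * qgamma p (w - x - y) / (qgamma p (w - x) * qgamma p (w - y)))"
proof -
  define A B C where "A = qpow p x" and "B = qpow p y" and "C = qpow p w"
  have P: "qpoch_inf (qpow p u) p \<noteq> 0" if "u \<notin> qgamma_poles p" for u
    using that by (simp add: qgamma_poles_def)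
  have G: "qgamma p u \<noteq> 0" if "u \<notin> qgamma_poles p" for u
    by (rule qgamma_nonzero[OF p that])
  have ratios: "C / (A * B) = qpow p (w - x - y)" "C / A = qpow p (w - x)" "C / B = qpow p (w - y)"
    by (simp_all add: A_def B_def C_def qpow_diff)
  have summand: "qgamma p (x + of_nat n) * qgamma p (y + of_nat n)
      / (complex_of_real (qfact p n) * qgamma p (w + of_nat n)) * qpow p ((w - x - y) * of_nat n)
      = qgamma p x * qgamma p y / qgamma p w * qgauss_term A B C p n" for n
  proof -
    have shifted: "qgamma p (x + of_nat n) = qgamma p x * qpoch A p n / complex_of_real (1 - p) ^ n"
      "qgamma p (y + of_nat n) = qgamma p y * qpoch B p n / complex_of_real (1 - p) ^ n"
      "qgamma p (w + of_nat n) = qgamma p w * qpoch C p n / complex_of_real (1 - p) ^ n"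
      unfolding A_def B_def C_def using poles by (simp_all add: qgamma_add_of_nat[OF p])
    have power: "qpow p ((w - x - y) * of_nat n) = (C / (A * B)) ^ n"
      by (simp add: qpow_mult_of_nat ratios(1))
    have "qgamma p w \<noteq> 0" "qpoch C p n \<noteq> 0" "qpoch (complex_of_real p) p n \<noteq> 0"
      "complex_of_real (1 - p) \<noteq> 0"
      using G[OF poles(3)] qpoch_nonzero[OF p P[OF poles(3)], of n]
        qpoch_nonzero[OF p qpoch_inf_of_real_nonzero[OF p p], of n] p
      by (simp_all add: C_def)
    then show ?thesis
      unfolding shifted power of_real_qfact[OF p] qgauss_term_def by (simp add: field_simps)
  qed
  have "qgauss_term A B C p sums
      (qpoch_inf (qpow p (w - x)) p * qpoch_inf (qpow p (w - y)) p /
        (qpoch_inf (qpow p w) p * qpoch_inf (qpow p (w - x - y)) p))"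
  proof -
    have AB: "A \<noteq> 0" "B \<noteq> 0" and C: "qpoch_inf C p \<noteq> 0"
      using P[OF poles(3)] by (simp_all add: A_def B_def C_def)
    have z: "norm (C / (A * B)) < 1" and CAB: "qpoch_inf (C / (A * B)) p \<noteq> 0"
      unfolding ratios using norm_qpow_less_1[OF p re] P[OF poles(4)] by simp_all
    show ?thesis
      using q_gauss_sum[OF p AB z C CAB] unfolding ratios by (simp only: C_def)
  qed
  then have "(\<lambda>n. qgamma p x * qgamma p y / qgamma p w * qgauss_term A B C p n) sums
      (qgamma p x * qgamma p y / qgamma p w *
        (qpoch_inf (qpow p (w - x)) p * qpoch_inf (qpow p (w - y)) p /
          (qpoch_inf (qpow p w) p * qpoch_inf (qpow p (w - x - y)) p)))"
    by (rule sums_mult)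
  moreover have "qgamma p x * qgamma p y / qgamma p w *
        (qpoch_inf (qpow p (w - x)) p * qpoch_inf (qpow p (w - y)) p /
          (qpoch_inf (qpow p w) p * qpoch_inf (qpow p (w - x - y)) p)) =
      qgamma p x * qgamma p y * qgamma p (w - x - y) / (qgamma p (w - x) * qgamma p (w - y))"
  proof -
    have "qgamma p (w - x - y) * qgamma p w * qpoch_inf (qpow p (w - x - y)) p * qpoch_inf (qpow p w) p =
        qgamma p (w - x) * qgamma p (w - y) * qpoch_inf (qpow p (w - x)) p * qpoch_inf (qpow p (w - y)) p"
      by (rule qgamma_qpoch_inf_balance[OF poles(4,3,5,6)]) simp
    then show ?thesis
      using G[OF poles(3)] G[OF poles(5)] G[OF poles(6)] P[OF poles(3)] P[OF poles(4)]
      by (simp add: field_simps)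
  qed
  ultimately show ?thesis
    unfolding summand by simp
qed

lemma q_gauss_sum_qshift:
  assumes p: "0 < p" "p < 1" and re: "Re (c - a - b) > 0"
    and poles: "\<alpha> \<notin> qgamma_poles p" "1 - \<alpha> \<notin> qgamma_poles p"
      "\<alpha> + a \<notin> qgamma_poles p" "1 - \<alpha> + b \<notin> qgamma_poles p" "c + 1 \<notin> qgamma_poles p"
      "c - a - b \<notin> qgamma_poles p" "1 - \<alpha> + (c - a) \<notin> qgamma_poles p" "\<alpha> + (c - b) \<notin> qgamma_poles p"
  shows "(\<lambda>n. qshift p \<alpha> (a + of_nat n) * qshift p (1 - \<alpha>) (b + of_nat n)
              / (complex_of_real (qfact p n) * qgamma p (c + of_nat n + 1))
              * qpow p ((c - a - b) * of_nat n))
         sums (qshift p \<alpha> a * qshift p (1 - \<alpha>) b * qgamma p (c - a - b)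
               / (qshift p (1 - \<alpha>) (c - a) * qshift p \<alpha> (c - b)) / (qgamma p \<alpha> * qgamma p (1 - \<alpha>)))"
proof -
  have G: "qgamma p \<alpha> \<noteq> 0" "qgamma p (1 - \<alpha>) \<noteq> 0"
    "qgamma p (1 - \<alpha> + (c - a)) \<noteq> 0" "qgamma p (\<alpha> + (c - b)) \<noteq> 0"
    using qgamma_nonzero[OF p] poles(1,2,7,8) by auto
  have differences: "c + 1 - (\<alpha> + a) - (1 - \<alpha> + b) = c - a - b"
    "c + 1 - (\<alpha> + a) = 1 - \<alpha> + (c - a)" "c + 1 - (1 - \<alpha> + b) = \<alpha> + (c - b)"
    by (simp_all add: algebra_simps)
  have "(\<lambda>n. qgamma p (\<alpha> + a + of_nat n) * qgamma p (1 - \<alpha> + b + of_nat n)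
        / (complex_of_real (qfact p n) * qgamma p (c + 1 + of_nat n))
        * qpow p ((c - a - b) * of_nat n))
      sums (qgamma p (\<alpha> + a) * qgamma p (1 - \<alpha> + b) * qgamma p (c - a - b)
        / (qgamma p (1 - \<alpha> + (c - a)) * qgamma p (\<alpha> + (c - b))))"
    using q_gauss_sum_qgamma[of p "c + 1" "\<alpha> + a" "1 - \<alpha> + b",
        unfolded differences(1), unfolded differences(2,3), OF p re poles(3-8)] .
  then have "(\<lambda>n. qgamma p (\<alpha> + a + of_nat n) * qgamma p (1 - \<alpha> + b + of_nat n)
        / (complex_of_real (qfact p n) * qgamma p (c + 1 + of_nat n))
        * qpow p ((c - a - b) * of_nat n) / (qgamma p \<alpha> * qgamma p (1 - \<alpha>)))
      sums (qgamma p (\<alpha> + a) * qgamma p (1 - \<alpha> + b) * qgamma p (c - a - b)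
        / (qgamma p (1 - \<alpha> + (c - a)) * qgamma p (\<alpha> + (c - b)))
        / (qgamma p \<alpha> * qgamma p (1 - \<alpha>)))"
    by (rule sums_divide)
  moreover have "qshift p \<alpha> (a + of_nat n) * qshift p (1 - \<alpha>) (b + of_nat n)
        / (complex_of_real (qfact p n) * qgamma p (c + of_nat n + 1)) * qpow p ((c - a - b) * of_nat n)
      = qgamma p (\<alpha> + a + of_nat n) * qgamma p (1 - \<alpha> + b + of_nat n)
        / (complex_of_real (qfact p n) * qgamma p (c + 1 + of_nat n))
        * qpow p ((c - a - b) * of_nat n) / (qgamma p \<alpha> * qgamma p (1 - \<alpha>))" for n
    unfolding qshift_def using G by (simp add: add_ac mult_ac)
  moreover have "qshift p \<alpha> a * qshift p (1 - \<alpha>) b * qgamma p (c - a - b)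
        / (qshift p (1 - \<alpha>) (c - a) * qshift p \<alpha> (c - b)) / (qgamma p \<alpha> * qgamma p (1 - \<alpha>))
      = qgamma p (\<alpha> + a) * qgamma p (1 - \<alpha> + b) * qgamma p (c - a - b)
        / (qgamma p (1 - \<alpha> + (c - a)) * qgamma p (\<alpha> + (c - b))) / (qgamma p \<alpha> * qgamma p (1 - \<alpha>))"
    unfolding qshift_def using G by (simp add: field_simps)
  ultimately show ?thesis
    by simp
qed

theorem theorem1p1:
  fixes q :: real and \<alpha> a b c :: complex
  assumes q: "0 < q" "q < 1"
    and re: "Re (c - a - b) > 0"
    and poles_n: "\<And>n::nat. \<alpha> + a + of_nat n \<notin> qgamma_poles (q^2)"
                 "\<And>n::nat. 1 - \<alpha> + b + of_nat n \<notin> qgamma_poles (q^2)"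
                 "\<And>n::nat. c + of_nat n + 1 \<notin> qgamma_poles (q^2)"
    and poles: "\<alpha> \<notin> qgamma_poles (q^2)" "1 - \<alpha> \<notin> qgamma_poles (q^2)"
               "\<alpha> + a \<notin> qgamma_poles (q^2)" "1 - \<alpha> + b \<notin> qgamma_poles (q^2)"
               "c - a - b \<notin> qgamma_poles (q^2)"
               "1 - \<alpha> + (c - a) \<notin> qgamma_poles (q^2)"
               "\<alpha> + (c - b) \<notin> qgamma_poles (q^2)"
  shows "(\<lambda>n. qshift (q^2) \<alpha> (a + of_nat n) * qshift (q^2) (1 - \<alpha>) (b + of_nat n)
              / (complex_of_real (qfact (q^2) n) * qgamma (q^2) (c + of_nat n + 1))
              * qpow q (2 * (c - a - b) * of_nat n))
         sums (qshift (q^2) \<alpha> a * qshift (q^2) (1 - \<alpha>) b * qgamma (q^2) (c - a - b)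
               / (qshift (q^2) (1 - \<alpha>) (c - a) * qshift (q^2) \<alpha> (c - b))
               * qpow q (- \<alpha> * (\<alpha> - 1)) * qsin q \<alpha> / qpi q)"
proof -
  have p: "0 < q\<^sup>2" "q\<^sup>2 < 1"
    using q by (auto simp: power_less_one_iff)
  have c_plus_1: "c + 1 \<notin> qgamma_poles (q\<^sup>2)"
    using poles_n(3)[of 0] by simp
  have exponent: "qpow q (2 * (c - a - b) * of_nat n) = qpow (q\<^sup>2) ((c - a - b) * of_nat n)" for n
    by (simp only: qpow_power2[OF q(1)] mult.assoc)
  have reflection: "X * qpow q (- \<alpha> * (\<alpha> - 1)) * qsin q \<alpha> / qpi q = X / (qgamma (q\<^sup>2) \<alpha> * qgamma (q\<^sup>2) (1 - \<alpha>))"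
    for X
  proof -
    have "X * qpow q (- \<alpha> * (\<alpha> - 1)) * qsin q \<alpha> / qpi q = X * (qpow q (- \<alpha> * (\<alpha> - 1)) * qsin q \<alpha> / qpi q)"
      by (simp only: times_divide_eq_right mult.assoc)
    then show ?thesis
      unfolding qgamma_reflection[OF q poles(1,2)] by simp
  qed
  show ?thesis
    unfolding exponent reflection by (rule q_gauss_sum_qshift[OF p re poles(1-4) c_plus_1 poles(5-7)])
qed

end
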